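(* Let $c$ and $k$ be non-negative integers, let $p$ be a prime, let $G$ be a finitely generated pro-$p$ group of nilpotency class $c$, and let $K=G^{p^k}$. (a) Suppose $p$ is odd and $k-1\geq \log_p(c+1)$. Then $[N,K]\leq N^p$ for every normal subgroup $N$ of $G$; in particular $K$ is powerful. (b) Suppose $p=2$ and $k-2\geq \log_2(c+1)$. Then $[N,K]\leq N^4$ for every normal subgroup $N$ of $G$; in particular $K$ is powerful.
   Context: In pro-$p$ groups, subgroups are closed and generation is topological. For a (pro-)$p$ group $H$, $H^{p^j}$ denotes the (closed) subgroup generated by all $p^j$-th powers of elements of $H$, and $[H,L]$ is the (closed) subgroup generated by commutators $[x,y]=x^{-1}y^{-1}xy$, $x\in H$, $y\in L$. A (pro-)$p$ group $H$ is powerful if $[H,H]\leq H^p$ for $p$ odd, and $[H,H]\leq H^4$ for $p=2$. *)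

theory Defs
  imports "HOL-Algebra.Algebra" "HOL-Analysis.Analysis"
begin

definition topological_group :: "('a, 'b) monoid_scheme \<Rightarrow> 'a topology \<Rightarrow> bool" where
  "topological_group G T \<longleftrightarrow> group G \<and> topspace T = carrier G
     \<and> continuous_map (prod_topology T T) T (\<lambda>(x, y). x \<otimes>\<^bsub>G\<^esub> y)
     \<and> continuous_map T T (\<lambda>x. inv\<^bsub>G\<^esub> x)"

definition pro_p_group :: "nat \<Rightarrow> ('a, 'b) monoid_scheme \<Rightarrow> 'a topology \<Rightarrow> bool" where
  "pro_p_group p G T \<longleftrightarrow> topological_group G T \<and> compact_space T \<and> Hausdorff_space T
     \<and> (\<forall>U. openin T U \<and> \<one>\<^bsub>G\<^esub> \<in> U \<longrightarrow> (\<exists>N. N \<lhd> G \<and> openin T N \<and> N \<subseteq> U))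
     \<and> (\<forall>N. N \<lhd> G \<and> openin T N \<longrightarrow> (\<exists>m. card (rcosets\<^bsub>G\<^esub> N) = p ^ m))"

definition cgen :: "('a, 'b) monoid_scheme \<Rightarrow> 'a topology \<Rightarrow> 'a set \<Rightarrow> 'a set" where
  "cgen G T S = T closure_of (generate G S)"

definition topologically_finitely_generated :: "('a, 'b) monoid_scheme \<Rightarrow> 'a topology \<Rightarrow> bool" where
  "topologically_finitely_generated G T \<longleftrightarrow>
     (\<exists>S. finite S \<and> S \<subseteq> carrier G \<and> cgen G T S = carrier G)"

definition gcomm :: "('a, 'b) monoid_scheme \<Rightarrow> 'a \<Rightarrow> 'a \<Rightarrow> 'a" where
  "gcomm G x y = inv\<^bsub>G\<^esub> x \<otimes>\<^bsub>G\<^esub> inv\<^bsub>G\<^esub> y \<otimes>\<^bsub>G\<^esub> x \<otimes>\<^bsub>G\<^esub> y"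

definition comm_sub :: "('a, 'b) monoid_scheme \<Rightarrow> 'a topology \<Rightarrow> 'a set \<Rightarrow> 'a set \<Rightarrow> 'a set" where
  "comm_sub G T H L = cgen G T {gcomm G x y | x y. x \<in> H \<and> y \<in> L}"

definition pow_sub :: "('a, 'b) monoid_scheme \<Rightarrow> 'a topology \<Rightarrow> 'a set \<Rightarrow> nat \<Rightarrow> 'a set" where
  "pow_sub G T H n = cgen G T {x [^]\<^bsub>G\<^esub> n | x. x \<in> H}"

text \<open>Lower central series: gamma 1 = G, gamma (i+1) = [gamma i, G].\<close>
fun lcs :: "('a, 'b) monoid_scheme \<Rightarrow> 'a topology \<Rightarrow> nat \<Rightarrow> 'a set" where
  "lcs G T 0 = carrier G"
| "lcs G T (Suc i) = (if i = 0 then carrier G else comm_sub G T (lcs G T i) (carrier G))"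

definition nilpotency_class :: "('a, 'b) monoid_scheme \<Rightarrow> 'a topology \<Rightarrow> nat \<Rightarrow> bool" where
  "nilpotency_class G T c \<longleftrightarrow> lcs G T (Suc c) = {\<one>\<^bsub>G\<^esub>}
     \<and> (c = 0 \<or> lcs G T c \<noteq> {\<one>\<^bsub>G\<^esub>})"

definition powerful :: "nat \<Rightarrow> ('a, 'b) monoid_scheme \<Rightarrow> 'a topology \<Rightarrow> 'a set \<Rightarrow> bool" where
  "powerful p G T H \<longleftrightarrow>
     (if p = 2 then comm_sub G T H H \<subseteq> pow_sub G T H 4
      else comm_sub G T H H \<subseteq> pow_sub G T H p)"

end

theory Submission
  imports Defs
begin

text \<open>
  Let N and C be normal subgroups of G with
  w ^ q \<in> C for all w \<in> N, and write N_t for [N, G, ..., G] (t commutators), so that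
  N_c = 1 when G has class c. For x \<in> N and y \<in> G the sequence g n = [x, y ^ n] has t-th
  finite differences conjugate to [x, y, ..., y] \<in> N_t. With respect to the filtration
  F t = N_t C, which satisfies [F i, F j] \<subseteq> F (i + j), such sequences are closed under products
  and commutators (Lazard's polynomial maps), and therefore have a Newton expansion
  g n \<equiv> e_0 ^ (n choose 0) \<cdots> e_(c-1) ^ (n choose (c - 1)) modulo F c \<subseteq> C, with e_t \<in> F t and
  e_0 = g 0 = 1. The bound on k makes q = p (resp. q = 4) divide (p ^ k choose t) for 0 < t < c,
  so [x, y ^ (p ^ k)] \<in> C. Taking C = N ^ q and passing to closures gives [N, K] \<le> N ^ q, and
  N = K gives powerfulness.
\<close>

section \<open>Commutator calculus\<close>

context group
begin

lemma inv_mult_cancel_left [simp]: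
  "x \<in> carrier G \<Longrightarrow> y \<in> carrier G \<Longrightarrow> inv x \<otimes> (x \<otimes> y) = y"
  by (simp add: m_assoc [symmetric])

lemma mult_inv_cancel_left [simp]:
  "x \<in> carrier G \<Longrightarrow> y \<in> carrier G \<Longrightarrow> x \<otimes> (inv x \<otimes> y) = y"
  by (simp add: m_assoc [symmetric])

lemmas group_normalize =
  m_assoc inv_mult_group inv_inv l_inv r_inv l_one r_one inv_closed m_closed
  inv_mult_cancel_left mult_inv_cancel_left

lemma gcomm_eq:
  "x \<in> carrier G \<Longrightarrow> y \<in> carrier G \<Longrightarrow> gcomm G x y = inv x \<otimes> (inv y \<otimes> (x \<otimes> y))"
  by (simp add: gcomm_def m_assoc)

lemma gcomm_closed [simp]:
  "x \<in> carrier G \<Longrightarrow> y \<in> carrier G \<Longrightarrow> gcomm G x y \<in> carrier G"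
  by (simp add: gcomm_def)

lemma subgroup_nat_pow_closed: "subgroup H G \<Longrightarrow> x \<in> H \<Longrightarrow> x [^] (n::nat) \<in> H"
  by (induction n) (auto intro: subgroup.one_closed subgroup.m_closed)

lemma conj_nat_pow:
  assumes "g \<in> carrier G" "w \<in> carrier G"
  shows "g \<otimes> w [^] (n::nat) \<otimes> inv g = (g \<otimes> w \<otimes> inv g) [^] n"
proof (induction n)
  case (Suc n)
  have "g \<otimes> w [^] Suc n \<otimes> inv g = (g \<otimes> w [^] n \<otimes> inv g) \<otimes> (g \<otimes> w \<otimes> inv g)"
    using assms by (simp add: group_normalize)
  with Suc show ?case by simp
qed (use assms in simp)

lemma conj_gcomm:
  assumes [simp]: "x \<in> carrier G" "a \<in> carrier G" "g \<in> carrier G"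
  shows "x \<otimes> gcomm G a g \<otimes> inv x = gcomm G (x \<otimes> a \<otimes> inv x) (x \<otimes> g \<otimes> inv x)"
  by (simp add: gcomm_eq group_normalize)

lemma inv_gcomm:
  assumes [simp]: "a \<in> carrier G" "b \<in> carrier G"
  shows "inv (gcomm G a b) = gcomm G b a"
  by (simp add: gcomm_eq group_normalize)

lemma gcomm_mult_right:
  assumes [simp]: "a \<in> carrier G" "b \<in> carrier G" "b' \<in> carrier G"
  shows "gcomm G a (b \<otimes> b') = gcomm G a b' \<otimes> (inv b' \<otimes> gcomm G a b \<otimes> b')"
  by (simp add: gcomm_eq group_normalize)

lemma gcomm_inv_right:
  assumes [simp]: "a \<in> carrier G" "b \<in> carrier G"
  shows "gcomm G a (inv b) = b \<otimes> inv (gcomm G a b) \<otimes> inv b"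
  by (simp add: gcomm_eq group_normalize)

lemma gcomm_mult_left:
  assumes [simp]: "a \<in> carrier G" "a' \<in> carrier G" "b \<in> carrier G"
  shows "gcomm G (a \<otimes> a') b = (inv a' \<otimes> gcomm G a b \<otimes> a') \<otimes> gcomm G a' b"
  by (simp add: gcomm_eq group_normalize)

lemma gcomm_inv_left:
  assumes [simp]: "a \<in> carrier G" "b \<in> carrier G"
  shows "gcomm G (inv a) b = a \<otimes> inv (gcomm G a b) \<otimes> inv a"
  by (simp add: gcomm_eq group_normalize)

lemma hall_witt:
  assumes [simp]: "a \<in> carrier G" "b \<in> carrier G" "c \<in> carrier G"
  shows "(b \<otimes> gcomm G (gcomm G c b) a \<otimes> inv b) \<otimes>
         (inv a \<otimes> gcomm G (gcomm G (inv b) (inv a)) c \<otimes> a) \<otimes>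
         (inv c \<otimes> gcomm G (gcomm G a (inv c)) (inv b) \<otimes> c) = \<one>"
  by (simp add: gcomm_eq group_normalize)

lemma gcomm_in_normal_left:
  assumes C: "C \<lhd> G" and a: "a \<in> C" and b: "b \<in> carrier G"
  shows "gcomm G a b \<in> C"
proof -
  interpret C: normal C G by (fact C)
  have "a \<in> carrier G" using a C.subset by blast
  then have "gcomm G a b = inv a \<otimes> (inv b \<otimes> a \<otimes> b)"
    using b by (simp add: gcomm_eq group_normalize)
  moreover have "inv a \<otimes> (inv b \<otimes> a \<otimes> b) \<in> C"
    using C.inv_op_closed1 [OF b a] C.m_inv_closed [OF a] by (rule C.m_closed [rotated])
  ultimately show ?thesis by simp
qed

lemma gcomm_in_normal_right:
  assumes C: "C \<lhd> G" and b: "b \<in> C" and a: "a \<in> carrier G"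
  shows "gcomm G a b \<in> C"
proof -
  interpret C: normal C G by (fact C)
  have "b \<in> carrier G" using b C.subset by blast
  then have "gcomm G a b = inv (gcomm G b a)" using a by (simp add: inv_gcomm)
  then show ?thesis using C.m_inv_closed [OF gcomm_in_normal_left [OF C b a]] by simp
qed

lemma subgroup_gcomm_in_right:
  assumes M: "M \<lhd> G" and a: "a \<in> carrier G"
  shows "subgroup {b \<in> carrier G. gcomm G a b \<in> M} G"
proof -
  interpret M: normal M G by (fact M)
  show ?thesis
  proof (rule subgroupI)
    show "{b \<in> carrier G. gcomm G a b \<in> M} \<noteq> {}"
      using a gcomm_in_normal_right [OF M M.one_closed a] by blast
  next
    fix b assume b: "b \<in> {b \<in> carrier G. gcomm G a b \<in> M}"
    then have "b \<otimes> inv (gcomm G a b) \<otimes> inv b \<in> M"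
      using M.inv_op_closed2 M.m_inv_closed by blast
    then show "inv b \<in> {b \<in> carrier G. gcomm G a b \<in> M}"
      using a b by (simp add: gcomm_inv_right)
  next
    fix b b' assume b: "b \<in> {b \<in> carrier G. gcomm G a b \<in> M}"
      and b': "b' \<in> {b \<in> carrier G. gcomm G a b \<in> M}"
    then have "gcomm G a b' \<otimes> (inv b' \<otimes> gcomm G a b \<otimes> b') \<in> M"
      using M.inv_op_closed1 M.m_closed by blast
    then show "b \<otimes> b' \<in> {b \<in> carrier G. gcomm G a b \<in> M}"
      using a b b' by (simp add: gcomm_mult_right)
  qed auto
qed

lemma subgroup_gcomm_in_left:
  assumes M: "M \<lhd> G" and b: "b \<in> carrier G"
  shows "subgroup {a \<in> carrier G. gcomm G a b \<in> M} G"
proof -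
  interpret M: normal M G by (fact M)
  show ?thesis
  proof (rule subgroupI)
    show "{a \<in> carrier G. gcomm G a b \<in> M} \<noteq> {}"
      using b gcomm_in_normal_left [OF M M.one_closed b] by blast
  next
    fix a assume a: "a \<in> {a \<in> carrier G. gcomm G a b \<in> M}"
    then have "a \<otimes> inv (gcomm G a b) \<otimes> inv a \<in> M"
      using M.inv_op_closed2 M.m_inv_closed by blast
    then show "inv a \<in> {a \<in> carrier G. gcomm G a b \<in> M}"
      using a b by (simp add: gcomm_inv_left)
  next
    fix a a' assume a: "a \<in> {a \<in> carrier G. gcomm G a b \<in> M}"
      and a': "a' \<in> {a \<in> carrier G. gcomm G a b \<in> M}"
    then have "(inv a' \<otimes> gcomm G a b \<otimes> a') \<otimes> gcomm G a' b \<in> M"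
      using M.inv_op_closed1 M.m_closed by blast
    then show "a \<otimes> a' \<in> {a \<in> carrier G. gcomm G a b \<in> M}"
      using a a' b by (simp add: gcomm_mult_left)
  qed auto
qed

lemma gcomm_generate_in_normal:
  assumes M: "M \<lhd> G" and S: "S \<subseteq> carrier G" and S': "S' \<subseteq> carrier G"
    and gens: "\<And>a b. a \<in> S \<Longrightarrow> b \<in> S' \<Longrightarrow> gcomm G a b \<in> M"
    and a: "a \<in> generate G S" and b: "b \<in> generate G S'"
  shows "gcomm G a b \<in> M"
proof -
  have right: "generate G S' \<subseteq> {b \<in> carrier G. gcomm G a b \<in> M}" if "a \<in> S" for a
    using that S S' gens by (intro generate_subgroup_incl subgroup_gcomm_in_right [OF M]) auto
  have bc: "b \<in> carrier G" using b S' generate_in_carrier by blast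
  have "generate G S \<subseteq> {a \<in> carrier G. gcomm G a b \<in> M}"
    using S b right by (intro generate_subgroup_incl subgroup_gcomm_in_left [OF M bc]) auto
  then show ?thesis using a by blast
qed

end

section \<open>The series [N, G, ..., G]\<close>

fun comm_series :: "('a, 'b) monoid_scheme \<Rightarrow> 'a set \<Rightarrow> nat \<Rightarrow> 'a set" where
  "comm_series G N 0 = N"
| "comm_series G N (Suc t) = generate G {gcomm G a g | a g. a \<in> comm_series G N t \<and> g \<in> carrier G}"

declare comm_series.simps(2) [simp del]

context group
begin

lemma comm_series_normal: "N \<lhd> G \<Longrightarrow> comm_series G N t \<lhd> G"
proof (induction t)
  case (Suc t)
  then interpret Nt: normal "comm_series G N t" G by blast
  show ?case unfolding comm_series.simps
  proof (rule normal_generateI)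
    fix h g assume h: "h \<in> {gcomm G a g |a g. a \<in> comm_series G N t \<and> g \<in> carrier G}"
      and g: "g \<in> carrier G"
    then obtain a x where h: "h = gcomm G a x" and a: "a \<in> comm_series G N t" and x: "x \<in> carrier G"
      by blast
    then have "g \<otimes> h \<otimes> inv g = gcomm G (g \<otimes> a \<otimes> inv g) (g \<otimes> x \<otimes> inv g)"
      using g Nt.subset by (auto simp: conj_gcomm)
    then show "g \<otimes> h \<otimes> inv g \<in> {gcomm G a g |a g. a \<in> comm_series G N t \<and> g \<in> carrier G}"
      using Nt.inv_op_closed2 [OF g a] g x by auto
  qed (use Nt.subset in auto)
qed simp

lemma comm_series_subset: "N \<lhd> G \<Longrightarrow> comm_series G N t \<subseteq> carrier G"
  using comm_series_normal normal_imp_subgroup subgroup.subset by blast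

lemma gcomm_in_comm_series:
  "a \<in> comm_series G N t \<Longrightarrow> g \<in> carrier G \<Longrightarrow> gcomm G a g \<in> comm_series G N (Suc t)"
  by (auto simp: comm_series.simps intro: generate.incl)

lemma gcomm_in_comm_series':
  assumes N: "N \<lhd> G" and a: "a \<in> comm_series G N t" and g: "g \<in> carrier G"
  shows "gcomm G g a \<in> comm_series G N (Suc t)"
proof -
  have "a \<in> carrier G" using comm_series_subset [OF N] a by blast
  then have "gcomm G g a = inv (gcomm G a g)" using g by (simp add: inv_gcomm)
  then show ?thesis using a g by (auto simp: comm_series.simps intro: generate.inv)
qed

lemma comm_series_Suc_subset: "N \<lhd> G \<Longrightarrow> comm_series G N (Suc t) \<subseteq> comm_series G N t"
  unfolding comm_series.simps(2)
  by (intro generate_subgroup_incl normal_imp_subgroup comm_series_normal)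
    (auto intro: gcomm_in_normal_left [OF comm_series_normal])

lemma comm_series_antimono:
  assumes "N \<lhd> G" and "i \<le> j" shows "comm_series G N j \<subseteq> comm_series G N i"
  using assms(2) by (induction j rule: dec_induct) (use comm_series_Suc_subset [OF assms(1)] in blast)+

lemma comm_series_mono: "N \<subseteq> M \<Longrightarrow> comm_series G N t \<subseteq> comm_series G M t"
proof (induction t)
  case (Suc t)
  then show ?case unfolding comm_series.simps by (intro mono_generate) blast
qed simp

lemma gcomm_comm_series_step:
  assumes N: "N \<lhd> G"
    and IH: "\<And>i a b. a \<in> comm_series G N i \<Longrightarrow> b \<in> comm_series G N j \<Longrightarrow>
               gcomm G a b \<in> comm_series G N (i + j + 1)"
    and a: "a \<in> comm_series G N i" and c: "c \<in> comm_series G N j" and g: "g \<in> carrier G"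
  shows "gcomm G a (gcomm G c g) \<in> comm_series G N (i + j + 2)"
proof -
  interpret M: normal "comm_series G N (i + j + 2)" G by (rule comm_series_normal [OF N])
  have ac: "a \<in> carrier G" and cc: "c \<in> carrier G"
    using a c comm_series_subset [OF N] by blast+
  have inv_in: "inv x \<in> comm_series G N t" if "x \<in> comm_series G N t" for x t
    by (rule subgroup.m_inv_closed [OF normal_imp_subgroup [OF comm_series_normal [OF N]] that])
  define w1 where "w1 = g \<otimes> gcomm G (gcomm G c g) a \<otimes> inv g"
  define w2 where "w2 = inv a \<otimes> gcomm G (gcomm G (inv g) (inv a)) c \<otimes> a"
  define w3 where "w3 = inv c \<otimes> gcomm G (gcomm G a (inv c)) (inv g) \<otimes> c"
  have "gcomm G (gcomm G (inv g) (inv a)) c \<in> comm_series G N (Suc i + j + 1)"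
    using IH [OF gcomm_in_comm_series' [OF N inv_in [OF a] inv_closed [OF g]] c] .
  then have w2: "w2 \<in> comm_series G N (i + j + 2)"
    unfolding w2_def using M.inv_op_closed1 [OF ac] by simp
  have "gcomm G (gcomm G a (inv c)) (inv g) \<in> comm_series G N (Suc (i + j + 1))"
    using gcomm_in_comm_series [OF IH [OF a inv_in [OF c]] inv_closed [OF g]] .
  then have w3: "w3 \<in> comm_series G N (i + j + 2)"
    unfolding w3_def using M.inv_op_closed1 [OF cc] by simp
  have "w1 \<otimes> (w2 \<otimes> w3) = \<one>"
    using hall_witt [OF ac g cc] ac cc g unfolding w1_def w2_def w3_def by (simp add: m_assoc)
  then have "w1 = inv (w2 \<otimes> w3)"
    using ac cc g unfolding w1_def w2_def w3_def by (intro inv_equality [symmetric]) simp_all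
  then have "inv g \<otimes> w1 \<otimes> g \<in> comm_series G N (i + j + 2)"
    using M.inv_op_closed1 [OF g] M.m_inv_closed M.m_closed [OF w2 w3] by simp
  moreover have "inv g \<otimes> w1 \<otimes> g = gcomm G (gcomm G c g) a"
    unfolding w1_def using ac cc g by (simp add: group_normalize)
  moreover have "gcomm G a (gcomm G c g) = inv (gcomm G (gcomm G c g) a)"
    using ac cc g by (simp add: inv_gcomm)
  ultimately show ?thesis using M.m_inv_closed by simp
qed

lemma gcomm_comm_series:
  assumes N: "N \<lhd> G"
  shows "a \<in> comm_series G N i \<Longrightarrow> b \<in> comm_series G N j \<Longrightarrow>
    gcomm G a b \<in> comm_series G N (i + j + 1)"
proof (induction j arbitrary: i a b)
  case 0
  then have "b \<in> carrier G" using subgroup.subset [OF normal_imp_subgroup [OF N]] by auto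
  then show ?case using gcomm_in_comm_series [OF 0(1)] by simp
next
  case (Suc j)
  let ?S = "{gcomm G c g |c g. c \<in> comm_series G N j \<and> g \<in> carrier G}"
  have S: "?S \<subseteq> carrier G" using comm_series_subset [OF N, of j] by (blast intro: gcomm_closed)
  have a: "{a} \<subseteq> carrier G" using Suc.prems(1) comm_series_subset [OF N] by auto
  have "gcomm G x y \<in> comm_series G N (i + Suc j + 1)" if "x \<in> {a}" and "y \<in> ?S" for x y
    using that gcomm_comm_series_step [OF N Suc.IH Suc.prems(1)] by auto
  moreover have "a \<in> generate G {a}" by (rule generate.incl) simp
  moreover have "b \<in> generate G ?S" using Suc.prems(2) by (simp add: comm_series.simps)
  ultimately show ?case
    by (rule gcomm_generate_in_normal [OF comm_series_normal [OF N] a S])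
qed

end

section \<open>Finite differences of sequences in a group\<close>

definition diff_seq :: "('a, 'b) monoid_scheme \<Rightarrow> (nat \<Rightarrow> 'a) \<Rightarrow> nat \<Rightarrow> 'a" where
  "diff_seq G g n = inv\<^bsub>G\<^esub> (g n) \<otimes>\<^bsub>G\<^esub> g (Suc n)"

fun binom_prod :: "('a, 'b) monoid_scheme \<Rightarrow> (nat \<Rightarrow> 'a) \<Rightarrow> nat \<Rightarrow> nat \<Rightarrow> 'a" where
  "binom_prod G e 0 n = \<one>\<^bsub>G\<^esub>"
| "binom_prod G e (Suc d) n = binom_prod G e d n \<otimes>\<^bsub>G\<^esub> e d [^]\<^bsub>G\<^esub> (n choose d)"

lemma funpow_diff_seq_Suc: "(diff_seq G ^^ Suc t) g = (diff_seq G ^^ t) (diff_seq G g)"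
  by (simp add: funpow_Suc_right del: funpow.simps)

context group
begin

lemma diff_seq_funpow_in:
  assumes H: "subgroup H G" and g: "\<And>n. g n \<in> H"
  shows "(diff_seq G ^^ t) g n \<in> H"
  using g
proof (induction t arbitrary: g n)
  case (Suc t)
  have "diff_seq G g n \<in> H" for n
    unfolding diff_seq_def using Suc.prems subgroup.m_closed [OF H] subgroup.m_inv_closed [OF H] by blast
  then show ?case using Suc.IH by (simp only: funpow_diff_seq_Suc)
qed simp

lemma diff_seq_mult:
  assumes "\<And>n. g n \<in> carrier G" "\<And>n. h n \<in> carrier G"
  shows "diff_seq G (\<lambda>n. g n \<otimes> h n) =
    (\<lambda>n. diff_seq G g n \<otimes> gcomm G (diff_seq G g n) (h n) \<otimes> diff_seq G h n)"
  using assms by (auto simp: diff_seq_def gcomm_eq group_normalize)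

lemma diff_seq_gcomm:
  assumes "\<And>n. u n \<in> carrier G" "\<And>n. v n \<in> carrier G"
  defines "a \<equiv> diff_seq G u" and "b \<equiv> diff_seq G v" and "x \<equiv> \<lambda>n. gcomm G (u n) (v n)"
  defines "w \<equiv> \<lambda>n. gcomm G (u n) (b n) \<otimes> gcomm G (gcomm G (u n) (b n)) (a n)"
  shows "diff_seq G x = (\<lambda>n. w n \<otimes> gcomm G (w n) (x n) \<otimes> gcomm G (x n) (a n) \<otimes>
    gcomm G (x n) (b n) \<otimes> gcomm G (gcomm G (x n) (b n)) (a n) \<otimes> gcomm G (a n) (b n) \<otimes>
    gcomm G (a n) (v n) \<otimes> gcomm G (gcomm G (a n) (v n)) (b n))"
  unfolding a_def b_def x_def w_def using assms(1,2)
  by (auto simp: diff_seq_def gcomm_eq group_normalize)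

lemma mod_normal_mult:
  assumes H: "H \<lhd> G" and u: "u \<in> carrier G" and v: "v \<in> carrier G"
    and x: "x \<in> carrier G" and y: "y \<in> carrier G" and ux: "inv u \<otimes> x \<in> H" and vy: "inv v \<otimes> y \<in> H"
  shows "inv (u \<otimes> v) \<otimes> (x \<otimes> y) \<in> H"
proof -
  interpret H: normal H G by (fact H)
  have "inv (u \<otimes> v) \<otimes> (x \<otimes> y) = (inv v \<otimes> (inv u \<otimes> x) \<otimes> v) \<otimes> (inv v \<otimes> y)"
    using u v x y by (simp add: group_normalize)
  then show ?thesis using H.inv_op_closed1 [OF v ux] vy by (simp add: H.m_closed)
qed

lemma seq_mod_leading_binom_pow:
  assumes H: "H \<lhd> G" and diff: "\<And>n. (diff_seq G ^^ Suc m) s n \<in> H"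
    and below: "\<And>j. j < m \<Longrightarrow> s j = \<one>" and s: "\<And>n. s n \<in> carrier G"
  shows "inv (s m [^] (n choose m)) \<otimes> s n \<in> H"
  using diff below s
proof (induction m arbitrary: s n)
  case 0
  interpret H: normal H G by (fact H)
  show ?case
  proof (induction n)
    case (Suc n)
    have "inv (s 0) \<otimes> s n \<in> H" using Suc "0.prems"(3) by simp
    moreover have "inv \<one> \<otimes> diff_seq G s n \<in> H" using "0.prems"(1) [of n] "0.prems"(3) by simp
    ultimately have "inv (s 0 \<otimes> \<one>) \<otimes> (s n \<otimes> diff_seq G s n) \<in> H"
      by (rule mod_normal_mult [OF H, rotated 4]) (simp_all add: diff_seq_def "0.prems"(3))
    then show ?case using "0.prems"(3) by (simp add: diff_seq_def group_normalize)
  qed (use "0.prems"(3) H.one_closed in simp)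
next
  case (Suc m)
  interpret H: normal H G by (fact H)
  let ?s' = "diff_seq G s"
  have s': "?s' n \<in> carrier G" for n using Suc.prems(3) by (simp add: diff_seq_def)
  have "(diff_seq G ^^ Suc m) ?s' n \<in> H" for n
    using Suc.prems(1) [of n] by (simp only: funpow_diff_seq_Suc)
  moreover have "?s' j = \<one>" if "j < m" for j
    using Suc.prems(2) [of j] Suc.prems(2) [of "Suc j"] that by (simp add: diff_seq_def)
  ultimately have "inv (?s' m [^] (n choose m)) \<otimes> ?s' n \<in> H" for n
    using Suc.IH s' by blast
  moreover have "?s' m = s (Suc m)" using Suc.prems(2,3) by (simp add: diff_seq_def)
  ultimately have IH: "inv (s (Suc m) [^] (n choose m)) \<otimes> ?s' n \<in> H" for n by simp
  note s = Suc.prems(3) and below = Suc.prems(2)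
  have c: "s (Suc m) \<in> carrier G" using s .
  show ?case
  proof (induction n)
    case (Suc n)
    have "inv (s (Suc m) [^] (n choose Suc m) \<otimes> s (Suc m) [^] (n choose m)) \<otimes> (s n \<otimes> ?s' n) \<in> H"
      using mod_normal_mult [OF H _ _ _ _ Suc IH] c s s' by simp
    then show ?case using c s by (simp add: diff_seq_def nat_pow_mult add.commute)
  qed (use below H.one_closed in simp)
qed

lemma diff_seq_binom_pow_Suc:
  assumes x: "x \<in> carrier G"
  shows "diff_seq G (\<lambda>n. x [^] (n choose Suc k)) = (\<lambda>n. x [^] (n choose k))"
proof
  fix n
  have "x [^] (Suc n choose Suc k) = x [^] (n choose Suc k) \<otimes> x [^] (n choose k)"
    using x by (simp add: nat_pow_mult add.commute)
  then show "diff_seq G (\<lambda>n. x [^] (n choose Suc k)) n = x [^] (n choose k)"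
    using x by (simp add: diff_seq_def)
qed

lemma diff_seq_funpow_binom_pow:
  assumes x: "x \<in> carrier G"
  shows "(diff_seq G ^^ s) (\<lambda>n. x [^] (n choose t)) =
    (\<lambda>n. if s \<le> t then x [^] (n choose (t - s)) else \<one>)"
proof (induction s)
  case (Suc s)
  consider "s < t" | "s = t" | "t < s" by linarith
  then show ?case
  proof cases
    case 1
    then have "t - s = Suc (t - Suc s)" by simp
    then show ?thesis using Suc 1 x by (simp add: diff_seq_binom_pow_Suc)
  qed (use Suc x in \<open>auto simp: diff_seq_def\<close>)
qed simp

lemma binom_prod_closed: "(\<And>t. e t \<in> carrier G) \<Longrightarrow> binom_prod G e d n \<in> carrier G"
  by (induction d) auto

lemma binom_prod_cong: "(\<And>t. t < d \<Longrightarrow> e t = e' t) \<Longrightarrow> binom_prod G e d n = binom_prod G e' d n"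
  by (induction d) auto

lemma binom_prod_at_0: "e 0 \<in> carrier G \<Longrightarrow> binom_prod G e (Suc d) 0 = e 0"
  by (induction d) auto

end

section \<open>Polynomial sequences relative to a filtration\<close>

locale comm_filtration = group G for G (structure) +
  fixes F :: "nat \<Rightarrow> 'a set"
  assumes normal_level: "F i \<lhd> G"
    and level_Suc_subset: "F (Suc i) \<subseteq> F i"
    and gcomm_level: "a \<in> F i \<Longrightarrow> b \<in> F j \<Longrightarrow> gcomm G a b \<in> F (i + j)"
begin

lemma subgroup_level: "subgroup (F i) G"
  using normal_level normal_imp_subgroup by blast

lemma level_subset_carrier: "x \<in> F i \<Longrightarrow> x \<in> carrier G"
  using subgroup_level [of i] by (rule subgroup.mem_carrier)

lemma level_antimono: "i \<le> j \<Longrightarrow> F j \<subseteq> F i"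
  by (induction j rule: dec_induct) (use level_Suc_subset in blast)+

text \<open>g has weight a in the sense of Lazard's polynomial maps, considered modulo F e.\<close>
definition filtered_seq :: "nat \<Rightarrow> nat \<Rightarrow> (nat \<Rightarrow> 'a) \<Rightarrow> bool" where
  "filtered_seq a e g \<longleftrightarrow> (\<forall>t n. (diff_seq G ^^ t) g n \<in> F (min (a + t) e))"

lemma filtered_seq_iff:
  "filtered_seq a e g \<longleftrightarrow> (\<forall>n. g n \<in> F (min a e)) \<and> filtered_seq (Suc a) e (diff_seq G g)"
proof -
  have split: "(\<forall>t. P t) \<longleftrightarrow> P 0 \<and> (\<forall>t. P (Suc t))" for P :: "nat \<Rightarrow> bool"
    by (metis nat.exhaust)
  show ?thesis
    unfolding filtered_seq_def split [of "\<lambda>t. \<forall>n. (diff_seq G ^^ t) g n \<in> F (min (a + t) e)"]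
    by (simp only: funpow_diff_seq_Suc funpow_0 add_0_right add_Suc_shift)
qed

lemma filtered_seq_in: "filtered_seq a e g \<Longrightarrow> g n \<in> F (min a e)"
  using filtered_seq_iff [of a e g] by blast

lemma filtered_seq_diff: "filtered_seq a e g \<Longrightarrow> filtered_seq (Suc a) e (diff_seq G g)"
  using filtered_seq_iff [of a e g] by blast

lemma filtered_seq_carrier: "filtered_seq a e g \<Longrightarrow> g n \<in> carrier G"
  using filtered_seq_in level_subset_carrier by blast

lemma filtered_seq_mono:
  assumes "filtered_seq a e g" "a' \<le> a" "e' \<le> e"
  shows "filtered_seq a' e' g"
  unfolding filtered_seq_def
proof (intro allI)
  fix t n
  have "min (a' + t) e' \<le> min (a + t) e" using assms(2,3) by linarith
  then show "(diff_seq G ^^ t) g n \<in> F (min (a' + t) e')"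
    using assms(1) level_antimono unfolding filtered_seq_def by blast
qed

lemma filtered_seq_top_level:
  assumes "\<And>n. g n \<in> F e" shows "filtered_seq a e g"
  unfolding filtered_seq_def
proof (intro allI)
  fix t n
  have "(diff_seq G ^^ t) g n \<in> F e" using diff_seq_funpow_in [OF subgroup_level assms] .
  then show "(diff_seq G ^^ t) g n \<in> F (min (a + t) e)" using level_antimono [of "min (a + t) e" e] by auto
qed

definition mult_closed_at :: "nat \<Rightarrow> nat \<Rightarrow> bool" where
  "mult_closed_at e l \<longleftrightarrow>
    (\<forall>g h. filtered_seq l e g \<longrightarrow> filtered_seq l e h \<longrightarrow> filtered_seq l e (\<lambda>n. g n \<otimes> h n))"

text \<open>Since [F a, F e2] and [F e1, F b] lie in F (a + e2) and F (e1 + b), the commutator of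
  u (known modulo F e1) and v (known modulo F e2) is known modulo F e.\<close>
definition gcomm_closed_at :: "nat \<Rightarrow> nat \<Rightarrow> bool" where
  "gcomm_closed_at e l \<longleftrightarrow>
    (\<forall>a b e1 e2 u v. a + b = l \<longrightarrow> a \<le> e1 \<longrightarrow> b \<le> e2 \<longrightarrow> e \<le> e1 + b \<longrightarrow> e \<le> e2 + a \<longrightarrow>
      filtered_seq a e1 u \<longrightarrow> filtered_seq b e2 v \<longrightarrow> filtered_seq l e (\<lambda>n. gcomm G (u n) (v n)))"

lemma gcomm_closed_atD:
  "gcomm_closed_at e (a + b) \<Longrightarrow> a \<le> e1 \<Longrightarrow> b \<le> e2 \<Longrightarrow> e \<le> e1 + b \<Longrightarrow> e \<le> e2 + a \<Longrightarrow>
    filtered_seq a e1 u \<Longrightarrow> filtered_seq b e2 v \<Longrightarrow>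
    filtered_seq (a + b) e (\<lambda>n. gcomm G (u n) (v n))"
  unfolding gcomm_closed_at_def by blast

lemma gcomm_filtered_seq_in:
  assumes "filtered_seq a e1 u" "filtered_seq b e2 v" "a \<le> e1" "b \<le> e2"
  shows "gcomm G (u n) (v n) \<in> F (a + b)"
  using filtered_seq_in [OF assms(1), of n] filtered_seq_in [OF assms(2), of n] assms(3,4)
  by (simp add: min_absorb1 gcomm_level)

lemma closed_at_above:
  assumes "e \<le> l" shows "mult_closed_at e l \<and> gcomm_closed_at e l"
proof
  show "mult_closed_at e l" unfolding mult_closed_at_def
  proof (intro allI impI)
    fix g h assume "filtered_seq l e g" "filtered_seq l e h"
    then have "g n \<otimes> h n \<in> F e" for n
      using filtered_seq_in assms subgroup.m_closed [OF subgroup_level] by (metis min_absorb2)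
    then show "filtered_seq l e (\<lambda>n. g n \<otimes> h n)" by (rule filtered_seq_top_level)
  qed
next
  show "gcomm_closed_at e l" unfolding gcomm_closed_at_def
  proof (intro allI impI)
    fix a b e1 e2 u v
    assume l: "a + b = l" and "a \<le> e1" "b \<le> e2" "filtered_seq a e1 u" "filtered_seq b e2 v"
    then have "gcomm G (u n) (v n) \<in> F l" for n using gcomm_filtered_seq_in by blast
    then show "filtered_seq l e (\<lambda>n. gcomm G (u n) (v n))"
      using level_antimono [OF assms] by (intro filtered_seq_top_level) blast
  qed
qed

lemma mult_closed_at_step:
  assumes l: "l < e" and above: "\<forall>l'>l. mult_closed_at e l' \<and> gcomm_closed_at e l'"
  shows "mult_closed_at e l"
  unfolding mult_closed_at_def
proof (intro allI impI)
  fix g h assume g: "filtered_seq l e g" and h: "filtered_seq l e h"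
  have mult: "filtered_seq (Suc l) e (\<lambda>n. g' n \<otimes> h' n)"
    if "filtered_seq (Suc l) e g'" "filtered_seq (Suc l) e h'" for g' h'
    using above that unfolding mult_closed_at_def by blast
  have Dg: "filtered_seq (Suc l) e (diff_seq G g)" and Dh: "filtered_seq (Suc l) e (diff_seq G h)"
    using g h by (simp_all add: filtered_seq_diff)
  have "gcomm_closed_at e (Suc l + l)" using above l by simp
  then have "filtered_seq (Suc l + l) e (\<lambda>n. gcomm G (diff_seq G g n) (h n))"
    by (rule gcomm_closed_atD [OF _ _ _ _ _ Dg h]) (use l in simp_all)
  then have "filtered_seq (Suc l) e (\<lambda>n. gcomm G (diff_seq G g n) (h n))"
    by (rule filtered_seq_mono) simp_all
  then have "filtered_seq (Suc l) e (diff_seq G (\<lambda>n. g n \<otimes> h n))"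
    using mult [OF mult [OF Dg] Dh] filtered_seq_carrier [OF g] filtered_seq_carrier [OF h]
    by (simp add: diff_seq_mult)
  moreover have "g n \<otimes> h n \<in> F (min l e)" for n
    using filtered_seq_in [OF g] filtered_seq_in [OF h] subgroup.m_closed [OF subgroup_level] by blast
  ultimately show "filtered_seq l e (\<lambda>n. g n \<otimes> h n)" using filtered_seq_iff by blast
qed

lemma gcomm_filtered_seq_above:
  assumes above: "\<forall>l'>l. gcomm_closed_at e l'" and l: "l < a + b"
    and "a \<le> e1" "b \<le> e2" "e \<le> e1 + b" "e \<le> e2 + a" "filtered_seq a e1 u" "filtered_seq b e2 v"
  shows "filtered_seq (Suc l) e (\<lambda>n. gcomm G (u n) (v n))"
proof -
  have "gcomm_closed_at e (a + b)" using above l by blast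
  then have "filtered_seq (a + b) e (\<lambda>n. gcomm G (u n) (v n))"
    by (rule gcomm_closed_atD) (rule assms)+
  then show ?thesis by (rule filtered_seq_mono) (use l in simp_all)
qed

lemma gcomm_closed_at_step:
  assumes l: "l < e" and outer: "\<forall>l'. gcomm_closed_at (e - 1) l'"
    and above: "\<forall>l'>l. mult_closed_at e l' \<and> gcomm_closed_at e l'"
  shows "gcomm_closed_at e l"
  unfolding gcomm_closed_at_def
proof (intro allI impI)
  fix a b e1 e2 u v
  assume ab: "a + b = l" "a \<le> e1" "b \<le> e2" "e \<le> e1 + b" "e \<le> e2 + a"
    and u: "filtered_seq a e1 u" and v: "filtered_seq b e2 v"
  let ?seq = "filtered_seq (Suc l) e"
  have mult: "?seq (\<lambda>n. g n \<otimes> h n)" if "?seq g" "?seq h" for g h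
    using above that unfolding mult_closed_at_def by blast
  have comm: "?seq (\<lambda>n. gcomm G (g n) (h n))"
    if "l < a' + b'" "a' \<le> e1'" "b' \<le> e2'" "e \<le> e1' + b'" "e \<le> e2' + a'"
      "filtered_seq a' e1' g" "filtered_seq b' e2' h" for a' b' e1' e2' g h
    by (rule gcomm_filtered_seq_above [OF _ that]) (use above in blast)
  define du where "du = diff_seq G u"
  define dv where "dv = diff_seq G v"
  define x where "x = (\<lambda>n. gcomm G (u n) (v n))"
  define w where "w = (\<lambda>n. gcomm G (u n) (dv n) \<otimes> gcomm G (gcomm G (u n) (dv n)) (du n))"
  have du: "filtered_seq (Suc a) e1 du" and dv: "filtered_seq (Suc b) e2 dv"
    unfolding du_def dv_def using u v by (simp_all add: filtered_seq_diff)
  have "filtered_seq (a + b) (e - 1) x"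
    unfolding x_def by (rule gcomm_closed_atD [OF spec [OF outer] ab(2,3) _ _ u v]) (use ab in simp_all)
  then have x: "filtered_seq l (e - 1) x" using ab(1) by simp
  have udv: "?seq (\<lambda>n. gcomm G (u n) (dv n))" by (rule comm [OF _ _ _ _ _ u dv]) (use ab l in simp_all)
  have w: "?seq w"
    unfolding w_def using ab l by (intro mult udv comm [OF _ _ _ _ _ udv du]) simp_all
  have xdv: "?seq (\<lambda>n. gcomm G (x n) (dv n))" by (rule comm [OF _ _ _ _ _ x dv]) (use ab l in simp_all)
  have duv: "?seq (\<lambda>n. gcomm G (du n) (v n))" by (rule comm [OF _ _ _ _ _ du v]) (use ab l in simp_all)
  have "?seq (\<lambda>n. w n \<otimes> gcomm G (w n) (x n) \<otimes> gcomm G (x n) (du n) \<otimes> gcomm G (x n) (dv n) \<otimes>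
      gcomm G (gcomm G (x n) (dv n)) (du n) \<otimes> gcomm G (du n) (dv n) \<otimes> gcomm G (du n) (v n) \<otimes>
      gcomm G (gcomm G (du n) (v n)) (dv n))"
    using ab l
    by (intro mult w comm [OF _ _ _ _ _ w x] comm [OF _ _ _ _ _ x du] xdv
        comm [OF _ _ _ _ _ xdv du] comm [OF _ _ _ _ _ du dv] duv comm [OF _ _ _ _ _ duv dv]) simp_all
  moreover have "diff_seq G x = (\<lambda>n. w n \<otimes> gcomm G (w n) (x n) \<otimes> gcomm G (x n) (du n) \<otimes>
      gcomm G (x n) (dv n) \<otimes> gcomm G (gcomm G (x n) (dv n)) (du n) \<otimes> gcomm G (du n) (dv n) \<otimes>
      gcomm G (du n) (v n) \<otimes> gcomm G (gcomm G (du n) (v n)) (dv n))"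
    unfolding x_def w_def du_def dv_def
    by (rule diff_seq_gcomm) (use filtered_seq_carrier u v in blast)+
  moreover have "x n \<in> F (min l e)" for n
    using gcomm_filtered_seq_in [OF u v ab(2,3), of n] level_antimono [of "min l e" l] ab(1)
    unfolding x_def by auto
  ultimately show "filtered_seq l e (\<lambda>n. gcomm G (u n) (v n))"
    using filtered_seq_iff [of l e x] unfolding x_def by simp
qed

text \<open>Downward induction on l inside an induction on e: the difference of a product involves
  only products and commutators of larger weight, while the difference of a commutator also
  involves the commutator itself, which is only known modulo F (e - 1).\<close>
lemma mult_gcomm_closed_at: "mult_closed_at e l \<and> gcomm_closed_at e l"
proof (induction e arbitrary: l rule: less_induct)
  case (less e)
  then have outer: "0 < e \<Longrightarrow> \<forall>l'. gcomm_closed_at (e - 1) l'" by simp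
  show ?case
  proof (induction "e - l" arbitrary: l rule: less_induct)
    case less
    show ?case
    proof (cases "e \<le> l")
      case True
      then show ?thesis by (rule closed_at_above)
    next
      case False
      then have above: "\<forall>l'>l. mult_closed_at e l' \<and> gcomm_closed_at e l'"
        using less by (metis diff_less_mono2 not_le)
      show ?thesis
        using mult_closed_at_step [OF _ above] gcomm_closed_at_step [OF _ _ above] outer False by simp
    qed
  qed
qed

lemma filtered_seq_mult:
  "filtered_seq l e g \<Longrightarrow> filtered_seq l e h \<Longrightarrow> filtered_seq l e (\<lambda>n. g n \<otimes> h n)"
  using mult_gcomm_closed_at unfolding mult_closed_at_def by blast

lemma filtered_seq_binom_pow:
  assumes x: "x \<in> F t" shows "filtered_seq 0 e (\<lambda>n. x [^] (n choose t))"
  unfolding filtered_seq_def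
proof (intro allI)
  fix s n
  have "x [^] (n choose (t - s)) \<in> F t" using subgroup_nat_pow_closed [OF subgroup_level x] .
  moreover have "s \<le> t \<Longrightarrow> F t \<subseteq> F (min (0 + s) e)" by (simp add: level_antimono)
  ultimately show "(diff_seq G ^^ s) (\<lambda>n. x [^] (n choose t)) n \<in> F (min (0 + s) e)"
    using x level_subset_carrier subgroup.one_closed [OF subgroup_level]
    by (auto simp: diff_seq_funpow_binom_pow)
qed

lemma filtered_seq_inv_binom_prod:
  assumes e: "\<And>t. e t \<in> F t" shows "filtered_seq 0 E (\<lambda>n. inv (binom_prod G e d n))"
proof (induction d)
  case 0
  show ?case by (rule filtered_seq_top_level) (simp add: subgroup.one_closed [OF subgroup_level])
next
  case (Suc d)
  have ec: "e t \<in> carrier G" for t using e level_subset_carrier by blast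
  have "(\<lambda>n. inv (binom_prod G e (Suc d) n)) = (\<lambda>n. inv (e d) [^] (n choose d) \<otimes> inv (binom_prod G e d n))"
    using ec binom_prod_closed [of e] by (simp add: nat_pow_inv inv_mult_group)
  moreover have "filtered_seq 0 E (\<lambda>n. inv (e d) [^] (n choose d))"
    by (rule filtered_seq_binom_pow) (use subgroup.m_inv_closed [OF subgroup_level e] in simp)
  ultimately show ?case using filtered_seq_mult Suc by simp
qed

lemma newton_interpolation_Suc:
  assumes g: "filtered_seq 0 (Suc d) g" and e: "\<forall>t. e t \<in> F t"
    and agree: "\<forall>n<d. binom_prod G e d n = g n"
    and rem: "\<forall>n. inv (binom_prod G e d n) \<otimes> g n \<in> F d"
  shows "\<exists>e'. (\<forall>t. e' t \<in> F t) \<and> (\<forall>n<Suc d. binom_prod G e' (Suc d) n = g n) \<and>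
    (\<forall>n. inv (binom_prod G e' (Suc d) n) \<otimes> g n \<in> F (Suc d))"
proof -
  have gc: "g n \<in> carrier G" for n using filtered_seq_carrier [OF g] .
  have Bc: "binom_prod G e d n \<in> carrier G" for n
    using binom_prod_closed e level_subset_carrier by blast
  define r where "r n = inv (binom_prod G e d n) \<otimes> g n" for n
  have rc: "r n \<in> carrier G" for n unfolding r_def using Bc gc by simp
  have "filtered_seq 0 (Suc d) r"
    unfolding r_def using filtered_seq_inv_binom_prod e g by (intro filtered_seq_mult) blast+
  then have "(diff_seq G ^^ Suc d) r n \<in> F (Suc d)" for n
    unfolding filtered_seq_def by (metis add_0 min.idem)
  moreover have "r j = \<one>" if "j < d" for j using agree that Bc gc by (simp add: r_def)
  ultimately have r: "inv (r d [^] (n choose d)) \<otimes> r n \<in> F (Suc d)" for n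
    using seq_mod_leading_binom_pow [OF normal_level] rc by blast
  define e' where "e' = e(d := r d)"
  have B': "binom_prod G e' (Suc d) n = binom_prod G e d n \<otimes> r d [^] (n choose d)" for n
    using binom_prod_cong [of d e' e] by (simp add: e'_def)
  have "\<forall>t. e' t \<in> F t" using e rem by (simp add: e'_def r_def)
  moreover have "binom_prod G e' (Suc d) n = g n" if "n < Suc d" for n
  proof (cases "n < d")
    case True
    then show ?thesis using B' [of n] agree rc gc by (simp add: binomial_eq_0 del: binom_prod.simps)
  next
    case False
    then have "n = d" using that by simp
    then show ?thesis using B' [of n] Bc gc by (simp add: r_def del: binom_prod.simps)
  qed
  moreover have "inv (binom_prod G e' (Suc d) n) \<otimes> g n \<in> F (Suc d)" for n
    using r [of n] B' [of n] Bc gc rc by (simp add: r_def group_normalize del: binom_prod.simps)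
  ultimately show ?thesis by blast
qed

lemma newton_interpolation:
  "filtered_seq 0 d g \<Longrightarrow> \<exists>e. (\<forall>t. e t \<in> F t) \<and> (\<forall>n<d. binom_prod G e d n = g n) \<and>
    (\<forall>n. inv (binom_prod G e d n) \<otimes> g n \<in> F d)"
proof (induction d arbitrary: g)
  case 0
  then have "g n \<in> F 0" for n using filtered_seq_in [of 0 0 g n] by simp
  then show ?case
    using filtered_seq_carrier [OF 0] subgroup.one_closed [OF subgroup_level]
    by (intro exI [of _ "\<lambda>_. \<one>"]) simp
next
  case (Suc d)
  from Suc.prems have "filtered_seq 0 d g" by (rule filtered_seq_mono) simp_all
  with Suc.IH show ?case using newton_interpolation_Suc [OF Suc.prems] by blast
qed

lemma filtered_seq_value_in:
  assumes g: "filtered_seq 0 d g" and g0: "g 0 = \<one>" and C: "subgroup C G" and Fd: "F d \<subseteq> C"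
    and pow: "\<And>w. w \<in> F 1 \<Longrightarrow> w [^] q \<in> C"
    and dvd: "\<And>t. 0 < t \<Longrightarrow> t < d \<Longrightarrow> q dvd (m choose t)"
  shows "g m \<in> C"
proof -
  obtain e where e: "\<forall>t. e t \<in> F t" and agree: "\<forall>n<d. binom_prod G e d n = g n"
    and rem: "\<forall>n. inv (binom_prod G e d n) \<otimes> g n \<in> F d"
    using newton_interpolation [OF g] by blast
  have ec: "e t \<in> carrier G" for t using e level_subset_carrier by blast
  have factor: "e t [^] (m choose t) \<in> C" if td: "t < d" for t
  proof (cases "t = 0")
    case True
    then obtain d' where d: "d = Suc d'" using td by (cases d) auto
    have "e 0 = binom_prod G e d 0" using binom_prod_at_0 [of e d'] ec d by (simp del: binom_prod.simps)
    also have "\<dots> = \<one>" using agree g0 d by simp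
    finally have "e 0 = \<one>" .
    then show ?thesis using True subgroup.one_closed [OF C] by simp
  next
    case False
    then have "q dvd (m choose t)" using dvd td by simp
    then obtain k where k: "m choose t = q * k" by (rule dvdE)
    have "e t \<in> F 1" using e level_antimono [of 1 t] False by auto
    then have "(e t [^] q) [^] k \<in> C" by (intro subgroup_nat_pow_closed [OF C] pow)
    then show ?thesis using k ec by (simp add: nat_pow_pow)
  qed
  have prefix: "binom_prod G e d' m \<in> C" if "d' \<le> d" for d'
    using that
  proof (induction d')
    case (Suc d')
    then show ?case using subgroup.m_closed [OF C] factor by simp
  qed (simp add: subgroup.one_closed [OF C])
  have "binom_prod G e d m \<in> C" by (rule prefix) simp
  moreover have "inv (binom_prod G e d m) \<otimes> g m \<in> C" using rem Fd by auto
  ultimately have "binom_prod G e d m \<otimes> (inv (binom_prod G e d m) \<otimes> g m) \<in> C"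
    by (rule subgroup.m_closed [OF C])
  then show ?thesis
    using binom_prod_closed [OF ec] filtered_seq_carrier [OF g] by (simp del: binom_prod.simps)
qed

end

context group
begin

lemma nat_pow_mult_normal:
  assumes C: "C \<lhd> G" and x: "x \<in> carrier G" and c: "c \<in> C"
  shows "\<exists>c'\<in>C. (x \<otimes> c) [^] (m::nat) = x [^] m \<otimes> c'"
proof (induction m)
  case 0
  show ?case using normal_imp_subgroup [OF C] subgroup.one_closed by force
next
  case (Suc m)
  interpret C: normal C G by (fact C)
  obtain c1 where c1: "c1 \<in> C" and pow: "(x \<otimes> c) [^] m = x [^] m \<otimes> c1" using Suc by blast
  have "(x \<otimes> c) [^] Suc m = x [^] Suc m \<otimes> ((inv x \<otimes> c1 \<otimes> x) \<otimes> c)"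
    using pow x c c1 C.subset by (auto simp: group_normalize)
  moreover have "(inv x \<otimes> c1 \<otimes> x) \<otimes> c \<in> C" using C.inv_op_closed1 [OF x c1] c by simp
  ultimately show ?case by blast
qed

lemma nat_pow_set_mult_in_normal:
  fixes q :: nat
  assumes C: "C \<lhd> G" and N: "N \<subseteq> carrier G" and pow: "\<And>x. x \<in> N \<Longrightarrow> x [^] q \<in> C"
    and w: "w \<in> N <#> C"
  shows "w [^] q \<in> C"
proof -
  obtain x c where x: "x \<in> N" and c: "c \<in> C" and wxc: "w = x \<otimes> c"
    using w unfolding set_mult_def by blast
  have "x \<in> carrier G" using x N by blast
  then obtain c' where "c' \<in> C" and "(x \<otimes> c) [^] q = x [^] q \<otimes> c'"
    using nat_pow_mult_normal [OF C _ c, of x q] by blast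
  then show ?thesis using subgroup.m_closed [OF normal_imp_subgroup [OF C] pow [OF x]] wxc by simp
qed

lemma diff_seq_conj_pow:
  assumes w: "w \<in> carrier G" and y: "y \<in> carrier G"
  shows "diff_seq G (\<lambda>n. inv (y [^] n) \<otimes> w \<otimes> y [^] n) = (\<lambda>n. inv (y [^] n) \<otimes> gcomm G w y \<otimes> y [^] n)"
    and "diff_seq G (\<lambda>n. gcomm G w (y [^] n)) = (\<lambda>n. inv (y [^] n) \<otimes> gcomm G w y \<otimes> y [^] n)"
proof -
  have ys: "y [^] Suc n = y \<otimes> y [^] n" for n using nat_pow_Suc2 [OF y] .
  show "diff_seq G (\<lambda>n. inv (y [^] n) \<otimes> w \<otimes> y [^] n) = (\<lambda>n. inv (y [^] n) \<otimes> gcomm G w y \<otimes> y [^] n)"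
    unfolding diff_seq_def ys using w y by (simp add: gcomm_eq group_normalize)
  show "diff_seq G (\<lambda>n. gcomm G w (y [^] n)) = (\<lambda>n. inv (y [^] n) \<otimes> gcomm G w y \<otimes> y [^] n)"
    unfolding diff_seq_def ys using w y by (simp add: gcomm_eq group_normalize)
qed

lemma diff_seq_funpow_gcomm_pow:
  assumes x: "x \<in> carrier G" and y: "y \<in> carrier G"
  shows "(diff_seq G ^^ Suc t) (\<lambda>n. gcomm G x (y [^] n)) =
    (\<lambda>n. inv (y [^] n) \<otimes> ((\<lambda>w. gcomm G w y) ^^ Suc t) x \<otimes> y [^] n)"
proof (induction t)
  case 0
  show ?case using diff_seq_conj_pow(2) [OF x y] by simp
next
  case (Suc t)
  let ?c = "((\<lambda>w. gcomm G w y) ^^ Suc t) x"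
  have c: "?c \<in> carrier G" using x y by (induction t) auto
  have "(diff_seq G ^^ Suc (Suc t)) (\<lambda>n. gcomm G x (y [^] n)) =
      diff_seq G ((diff_seq G ^^ Suc t) (\<lambda>n. gcomm G x (y [^] n)))"
    by (simp only: funpow.simps(2) o_apply)
  also have "\<dots> = (\<lambda>n. inv (y [^] n) \<otimes> gcomm G ?c y \<otimes> y [^] n)"
    by (simp only: Suc diff_seq_conj_pow(1) [OF c y])
  finally show ?case by (simp only: funpow.simps(2) o_apply)
qed

lemma diff_seq_funpow_gcomm_pow_in:
  assumes N: "N \<lhd> G" and x: "x \<in> N" and y: "y \<in> carrier G"
  shows "(diff_seq G ^^ t) (\<lambda>n. gcomm G x (y [^] n)) n \<in> comm_series G N t"
proof (cases t)
  case 0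
  then show ?thesis using gcomm_in_normal_left [OF N x] y by simp
next
  case (Suc s)
  interpret Ns: normal "comm_series G N (Suc s)" G by (rule comm_series_normal [OF N])
  have xc: "x \<in> carrier G" by (rule subgroup.mem_carrier [OF normal_imp_subgroup [OF N] x])
  have "((\<lambda>w. gcomm G w y) ^^ r) x \<in> comm_series G N r" for r
    using x y by (induction r) (simp_all add: gcomm_in_comm_series)
  then have "inv (y [^] n) \<otimes> ((\<lambda>w. gcomm G w y) ^^ Suc s) x \<otimes> y [^] n \<in> comm_series G N (Suc s)"
    by (intro Ns.inv_op_closed1 nat_pow_closed y)
  then show ?thesis
    unfolding Suc by (simp only: diff_seq_funpow_gcomm_pow [OF xc y])
qed

lemma subset_set_mult_left:
  assumes "A \<subseteq> carrier G" "\<one> \<in> K" shows "A \<subseteq> A <#> K"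
proof
  fix x assume x: "x \<in> A"
  then have "x = x \<otimes> \<one>" using assms(1) by auto
  then show "x \<in> A <#> K" unfolding set_mult_def using x assms(2) by blast
qed

lemma subset_set_mult_right:
  assumes "K \<subseteq> carrier G" "\<one> \<in> A" shows "K \<subseteq> A <#> K"
proof
  fix x assume x: "x \<in> K"
  then have "x = \<one> \<otimes> x" using assms(1) by auto
  then show "x \<in> A <#> K" unfolding set_mult_def using x assms(2) by blast
qed

lemma comm_filtration_comm_series_mult:
  assumes N: "N \<lhd> G" and C: "C \<lhd> G"
  shows "comm_filtration G (\<lambda>t. comm_series G N t <#> C)"
proof -
  interpret C: normal C G by (fact C)
  have gens: "comm_series G N t \<union> C \<subseteq> carrier G" for t
    using comm_series_subset [OF N] C.subset by blast
  have gen: "comm_series G N t <#> C \<subseteq> generate G (comm_series G N t \<union> C)" for t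
    unfolding set_mult_def by (auto intro: generate.incl generate.eng)
  have sub: "comm_series G N t \<union> C \<subseteq> comm_series G N t <#> C" for t
    using subset_set_mult_left [OF comm_series_subset [OF N] C.one_closed]
      subset_set_mult_right [OF C.subset subgroup.one_closed [OF normal_imp_subgroup [OF comm_series_normal [OF N]]]] by blast
  have gcomm_gens: "gcomm G a b \<in> comm_series G N (i + j) <#> C"
    if a: "a \<in> comm_series G N i \<union> C" and b: "b \<in> comm_series G N j \<union> C" for a b i j
  proof -
    have ac: "a \<in> carrier G" and bc: "b \<in> carrier G" using a b gens by blast+
    consider "a \<in> C" | "b \<in> C" | "a \<in> comm_series G N i" "b \<in> comm_series G N j" using a b by blast
    then have "gcomm G a b \<in> C \<union> comm_series G N (i + j)"
    proof cases
      case 3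
      then show ?thesis
        using gcomm_comm_series [OF N 3] comm_series_Suc_subset [OF N, of "i + j"] by auto
    qed (use gcomm_in_normal_left [OF C _ bc] gcomm_in_normal_right [OF C _ ac] in auto)
    then show ?thesis using sub by blast
  qed
  show ?thesis
  proof (intro comm_filtration.intro comm_filtration_axioms.intro is_group)
    show "comm_series G N t <#> C \<lhd> G" for t
      by (rule normal_subgroup_set_mult_closed [OF comm_series_normal [OF N] C])
    show "comm_series G N (Suc t) <#> C \<subseteq> comm_series G N t <#> C" for t
      using comm_series_Suc_subset [OF N] by (rule mono_set_mult) simp
    show "gcomm G a b \<in> comm_series G N (i + j) <#> C"
      if "a \<in> comm_series G N i <#> C" "b \<in> comm_series G N j <#> C" for a b i j
      using gcomm_generate_in_normal [OF normal_subgroup_set_mult_closed [OF comm_series_normal [OF N] C]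
          gens gens gcomm_gens] that gen by blast
  qed
qed

lemma gcomm_nat_pow_in_normal:
  assumes N: "N \<lhd> G" and C: "C \<lhd> G" and pow: "\<And>w. w \<in> N \<Longrightarrow> w [^] q \<in> C"
    and nil: "comm_series G N c \<subseteq> {\<one>}"
    and dvd: "\<And>t. 0 < t \<Longrightarrow> t < c \<Longrightarrow> q dvd (m choose t)"
    and x: "x \<in> N" and y: "y \<in> carrier G"
  shows "gcomm G x (y [^] m) \<in> C"
proof -
  interpret C: normal C G by (fact C)
  interpret F: comm_filtration G "\<lambda>t. comm_series G N t <#> C"
    by (rule comm_filtration_comm_series_mult [OF N C])
  have "F.filtered_seq 0 c (\<lambda>n. gcomm G x (y [^] n))"
    unfolding F.filtered_seq_def
  proof (intro allI)
    fix t n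
    have "(diff_seq G ^^ t) (\<lambda>n. gcomm G x (y [^] n)) n \<in> comm_series G N t <#> C"
      using diff_seq_funpow_gcomm_pow_in [OF N x y] subset_set_mult_left [OF comm_series_subset [OF N] C.one_closed]
      by blast
    then show "(diff_seq G ^^ t) (\<lambda>n. gcomm G x (y [^] n)) n \<in> comm_series G N (min (0 + t) c) <#> C"
      using F.level_antimono [of "min (0 + t) c" t] by auto
  qed
  moreover have "gcomm G x (y [^] (0::nat)) = \<one>"
    using subgroup.mem_carrier [OF normal_imp_subgroup [OF N] x] by (simp add: gcomm_eq group_normalize)
  moreover have "comm_series G N c <#> C \<subseteq> C"
  proof -
    have "comm_series G N c <#> C \<subseteq> C <#> C" using nil C.one_closed by (intro mono_set_mult) auto
    then show ?thesis by (simp add: subgroup_mult_id [OF C.subgroup_axioms])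
  qed
  moreover have "w [^] q \<in> C" if "w \<in> comm_series G N 1 <#> C" for w
  proof (rule nat_pow_set_mult_in_normal [OF C subgroup.subset [OF normal_imp_subgroup [OF N]] pow])
    show "w \<in> N <#> C" using that mono_set_mult [OF comm_series_antimono [OF N, of 0 1] order_refl] by auto
  qed
  ultimately show ?thesis
    by (rule F.filtered_seq_value_in [OF _ _ C.subgroup_axioms _ _ dvd])
qed

end

section \<open>Divisibility of binomial coefficients\<close>

lemma log_le_imp_pow_bound:
  assumes p: "(2::nat) \<le> p" and h: "log (real p) (real c + 1) \<le> real k - real j"
  shows "j \<le> k \<and> c + 1 \<le> p ^ (k - j)"
proof -
  have p1: "1 < real p" using p by simp
  then have "0 \<le> log (real p) (real c + 1)" by simp
  then have jk: "j \<le> k" using h by linarith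
  have "real c + 1 \<le> real p powr (real k - real j)" using h log_le_iff [OF p1, of "real c + 1"] by simp
  also have "\<dots> = real (p ^ (k - j))" using p1 jk by (simp add: powr_realpow [symmetric] of_nat_diff)
  finally show ?thesis using jk by linarith
qed

lemma prime_power_dvd_binomial:
  assumes p: "Factorial_Ring.prime (p::nat)" and t: "0 < t" and le: "t * p ^ j \<le> p ^ k"
  shows "p ^ j dvd (p ^ k choose t)"
proof -
  have p1: "1 < p" using p prime_gt_1_nat by blast
  have "t \<le> p ^ k" using le p1 by (metis le_trans mult_le_mono2 mult.right_neutral one_le_power less_imp_le)
  then have b0: "p ^ k choose t \<noteq> 0" by simp
  have "t * (p ^ k choose t) = p ^ k * ((p ^ k - 1) choose (t - 1))"
    using times_binomial_minus1_eq [OF t] by simp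
  then have "k \<le> multiplicity p (t * (p ^ k choose t))"
    using t b0 p1 by (intro multiplicity_geI) auto
  also have "\<dots> = multiplicity p t + multiplicity p (p ^ k choose t)"
    using p t b0 by (simp add: prime_elem_multiplicity_mult_distrib prime_imp_prime_elem)
  finally have k: "k \<le> multiplicity p t + multiplicity p (p ^ k choose t)" .
  have "p ^ multiplicity p t \<le> t" using multiplicity_dvd [of p t] t by (simp add: dvd_imp_le)
  then have "p ^ (multiplicity p t + j) \<le> p ^ k" using le by (metis mult_le_mono1 order_trans power_add)
  then have "multiplicity p t + j \<le> k" using power_le_imp_le_exp [OF p1] by blast
  then show ?thesis using k multiplicity_dvd' by (metis add_le_cancel_left le_trans)
qed

lemma prime_power_dvd_binomial_of_log:
  assumes p: "Factorial_Ring.prime (p::nat)" and h: "log (real p) (real c + 1) \<le> real k - real j"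
    and t: "0 < t" "t < c"
  shows "p ^ j dvd (p ^ k choose t)"
proof -
  have "j \<le> k" and c: "c + 1 \<le> p ^ (k - j)"
    using log_le_imp_pow_bound [OF prime_ge_2_nat [OF p] h] by auto
  then have "t * p ^ j \<le> p ^ (k - j) * p ^ j" using t by simp
  also have "\<dots> = p ^ k" using \<open>j \<le> k\<close> by (simp add: power_add [symmetric])
  finally show ?thesis by (rule prime_power_dvd_binomial [OF p t(1)])
qed

section \<open>Topological groups and closed generation\<close>

locale topgroup = group G for G (structure) +
  fixes T :: "'a topology"
  assumes topspace_eq: "topspace T = carrier G"
    and continuous_mult: "continuous_map (prod_topology T T) T (\<lambda>(x, y). x \<otimes> y)"
    and continuous_inv: "continuous_map T T (\<lambda>x. inv x)"

lemma topological_group_imp_topgroup: "topological_group G T \<Longrightarrow> topgroup G T"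
  unfolding topological_group_def by (intro topgroup.intro topgroup_axioms.intro) auto

context topgroup
begin

lemma continuous_map_mult:
  assumes f: "continuous_map T T f" and g: "continuous_map T T g"
  shows "continuous_map T T (\<lambda>z. f z \<otimes> g z)"
  using continuous_map_compose [OF continuous_map_pairedI [OF f g] continuous_mult]
  by (simp add: comp_def)

lemma continuous_map_inv: "continuous_map T T f \<Longrightarrow> continuous_map T T (\<lambda>z. inv (f z))"
  using continuous_map_compose [OF _ continuous_inv] by (simp add: comp_def)

lemma continuous_map_const: "a \<in> carrier G \<Longrightarrow> continuous_map T T (\<lambda>z. a)"
  using topspace_eq by simp

lemma continuous_map_ident: "continuous_map T T (\<lambda>z. z)"
  using continuous_map_id unfolding id_def .

lemma subgroup_closure:
  assumes H: "subgroup H G" shows "subgroup (T closure_of H) G"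
proof (rule subgroupI)
  show "T closure_of H \<subseteq> carrier G" using closure_of_subset_topspace topspace_eq by metis
  have "H \<subseteq> topspace T" using subgroup.subset [OF H] topspace_eq by simp
  then show "T closure_of H \<noteq> {}" using closure_of_subset subgroup.one_closed [OF H] by blast
next
  fix a assume a: "a \<in> T closure_of H"
  have "(\<lambda>x. inv x) ` (T closure_of H) \<subseteq> T closure_of ((\<lambda>x. inv x) ` H)"
    by (rule continuous_map_image_closure_subset [OF continuous_inv])
  also have "\<dots> \<subseteq> T closure_of H"
    by (rule closure_of_mono) (use subgroup.m_inv_closed [OF H] in blast)
  finally show "inv a \<in> T closure_of H" using a by blast
next
  fix a b assume a: "a \<in> T closure_of H" and b: "b \<in> T closure_of H"
  have "(\<lambda>(x, y). x \<otimes> y) ` (prod_topology T T closure_of (H \<times> H)) \<subseteq>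
      T closure_of ((\<lambda>(x, y). x \<otimes> y) ` (H \<times> H))"
    by (rule continuous_map_image_closure_subset [OF continuous_mult])
  also have "\<dots> \<subseteq> T closure_of H"
    by (rule closure_of_mono) (use subgroup.m_closed [OF H] in auto)
  finally show "a \<otimes> b \<in> T closure_of H" using a b by (auto simp: closure_of_Times)
qed

lemma normal_closure:
  assumes H: "H \<lhd> G" shows "(T closure_of H) \<lhd> G"
  unfolding normal_inv_iff
proof (intro conjI ballI)
  show "subgroup (T closure_of H) G" by (rule subgroup_closure [OF normal_imp_subgroup [OF H]])
next
  fix x h assume x: "x \<in> carrier G" and h: "h \<in> T closure_of H"
  have "continuous_map T T (\<lambda>z. x \<otimes> z \<otimes> inv x)"
    using x by (intro continuous_map_mult continuous_map_const continuous_map_ident) auto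
  then have "(\<lambda>z. x \<otimes> z \<otimes> inv x) ` (T closure_of H) \<subseteq> T closure_of ((\<lambda>z. x \<otimes> z \<otimes> inv x) ` H)"
    by (rule continuous_map_image_closure_subset)
  also have "\<dots> \<subseteq> T closure_of H"
    by (rule closure_of_mono) (use normal.inv_op_closed2 [OF H x] in blast)
  finally show "x \<otimes> h \<otimes> inv x \<in> T closure_of H" using h by blast
qed

lemma cgen_subset_carrier: "cgen G T S \<subseteq> carrier G"
  unfolding cgen_def using closure_of_subset_topspace topspace_eq by metis

lemma subset_cgen: "S \<subseteq> carrier G \<Longrightarrow> S \<subseteq> cgen G T S"
  unfolding cgen_def using closure_of_subset [of "generate G S" T] generate_incl topspace_eq generate.incl
  by (metis subset_iff)

lemma cgen_minimal: "S \<subseteq> H \<Longrightarrow> subgroup H G \<Longrightarrow> closedin T H \<Longrightarrow> cgen G T S \<subseteq> H"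
  unfolding cgen_def by (meson closure_of_minimal generate_subgroup_incl)

lemma pow_sub_normal:
  assumes N: "N \<lhd> G" shows "pow_sub G T N n \<lhd> G"
proof -
  have Nc: "N \<subseteq> carrier G" using normal_imp_subgroup [OF N] subgroup.subset by blast
  have "g \<otimes> x [^] n \<otimes> inv g \<in> {x [^] n |x. x \<in> N}" if "x \<in> N" "g \<in> carrier G" for x g
    using that conj_nat_pow [of g x n] Nc normal.inv_op_closed2 [OF N] by auto
  then have "generate G {x [^] n |x. x \<in> N} \<lhd> G"
    using Nc by (intro normal_generateI) auto
  then show ?thesis unfolding pow_sub_def cgen_def by (rule normal_closure)
qed

lemma closedin_pow_sub: "closedin T (pow_sub G T N n)"
  unfolding pow_sub_def cgen_def by simp

lemma subgroup_gcomm_in_closed: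
  assumes N: "N \<subseteq> carrier G" and C: "C \<lhd> G" "closedin T C"
  shows "subgroup {z \<in> carrier G. \<forall>x\<in>N. gcomm G x z \<in> C} G"
    and "closedin T {z \<in> carrier G. \<forall>x\<in>N. gcomm G x z \<in> C}"
proof -
  show "subgroup {z \<in> carrier G. \<forall>x\<in>N. gcomm G x z \<in> C} G"
  proof (rule subgroupI)
    show "{z \<in> carrier G. \<forall>x\<in>N. gcomm G x z \<in> C} \<noteq> {}"
      using N subgroup.one_closed [OF normal_imp_subgroup [OF C(1)]] by (auto intro!: exI [of _ \<one>] simp: gcomm_eq group_normalize)
    fix a b assume "a \<in> {z \<in> carrier G. \<forall>x\<in>N. gcomm G x z \<in> C}" "b \<in> {z \<in> carrier G. \<forall>x\<in>N. gcomm G x z \<in> C}"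
    then show "inv a \<in> {z \<in> carrier G. \<forall>x\<in>N. gcomm G x z \<in> C}"
      and "a \<otimes> b \<in> {z \<in> carrier G. \<forall>x\<in>N. gcomm G x z \<in> C}"
      using subgroup.m_inv_closed [OF subgroup_gcomm_in_right [OF C(1)]]
        subgroup.m_closed [OF subgroup_gcomm_in_right [OF C(1)]] N by blast+
  qed auto
  have closed_x: "closedin T {z \<in> topspace T. gcomm G x z \<in> C}" if "x \<in> N" for x
  proof -
    have "continuous_map T T (\<lambda>z. gcomm G x z)"
      unfolding gcomm_def using that N
      by (intro continuous_map_mult continuous_map_inv continuous_map_const continuous_map_ident) auto
    then show ?thesis using closedin_continuous_map_preimage C(2) by blast
  qed
  show "closedin T {z \<in> carrier G. \<forall>x\<in>N. gcomm G x z \<in> C}"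
  proof (cases "N = {}")
    case False
    have "{z \<in> carrier G. \<forall>x\<in>N. gcomm G x z \<in> C} = (\<Inter>x\<in>N. {z \<in> topspace T. gcomm G x z \<in> C})"
      using False topspace_eq by auto
    then show ?thesis using closedin_INT [OF False closed_x] by simp
  qed (simp add: topspace_eq [symmetric])
qed

lemma comm_sub_pow_sub_subset:
  assumes N: "N \<lhd> G" and C: "C \<lhd> G" "closedin T C"
    and gens: "\<And>x y. x \<in> N \<Longrightarrow> y \<in> carrier G \<Longrightarrow> gcomm G x (y [^] m) \<in> C"
  shows "comm_sub G T N (pow_sub G T (carrier G) m) \<subseteq> C"
proof -
  have Nc: "N \<subseteq> carrier G" using normal_imp_subgroup [OF N] subgroup.subset by blast
  define Z where "Z = {z \<in> carrier G. \<forall>x\<in>N. gcomm G x z \<in> C}"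
  have "pow_sub G T (carrier G) m \<subseteq> Z"
    unfolding pow_sub_def Z_def
    by (rule cgen_minimal [OF _ subgroup_gcomm_in_closed [OF Nc C]]) (use gens in auto)
  then show ?thesis
    unfolding comm_sub_def Z_def
    by (intro cgen_minimal [OF _ normal_imp_subgroup [OF C(1)] C(2)]) auto
qed

lemma lcs_subset_carrier: "lcs G T n \<subseteq> carrier G"
  by (cases n) (auto simp: comm_sub_def dest: subsetD [OF cgen_subset_carrier])

lemma comm_series_carrier_subset_lcs: "comm_series G (carrier G) t \<subseteq> lcs G T (Suc t)"
proof (induction t)
  case (Suc t)
  let ?S = "{gcomm G x y |x y. x \<in> lcs G T (Suc t) \<and> y \<in> carrier G}"
  have S: "?S \<subseteq> carrier G" using lcs_subset_carrier [of "Suc t"] by (blast intro: gcomm_closed)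
  have "comm_series G (carrier G) (Suc t) \<subseteq> generate G ?S"
    unfolding comm_series.simps(2) by (rule mono_generate) (use Suc in blast)
  also have "\<dots> \<subseteq> cgen G T ?S"
    unfolding cgen_def by (rule closure_of_subset) (use generate_incl [OF S] topspace_eq in simp)
  also have "\<dots> = lcs G T (Suc (Suc t))" by (simp add: comm_sub_def)
  finally show ?case .
qed simp

lemma comm_sub_pow_sub_le:
  assumes nil: "lcs G T (Suc c) = {\<one>}" and N: "N \<lhd> G"
    and dvd: "\<And>t. 0 < t \<Longrightarrow> t < c \<Longrightarrow> q dvd (m choose t)"
  shows "comm_sub G T N (pow_sub G T (carrier G) m) \<subseteq> pow_sub G T N q"
proof (rule comm_sub_pow_sub_subset [OF N pow_sub_normal [OF N] closedin_pow_sub])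
  fix x y assume x: "x \<in> N" and y: "y \<in> carrier G"
  have Nc: "N \<subseteq> carrier G" using normal_imp_subgroup [OF N] subgroup.subset by blast
  have "comm_series G N c \<subseteq> {\<one>}"
    using comm_series_mono [OF Nc, of c] comm_series_carrier_subset_lcs [of c] nil by blast
  moreover have "w [^] q \<in> pow_sub G T N q" if "w \<in> N" for w
    unfolding pow_sub_def using that Nc by (intro subsetD [OF subset_cgen]) auto
  ultimately show "gcomm G x (y [^] m) \<in> pow_sub G T N q"
    using gcomm_nat_pow_in_normal [OF N pow_sub_normal [OF N] _ _ dvd x y] by blast
qed

end

theorem lemma3p2:
  fixes G :: "('a, 'b) monoid_scheme" and T :: "'a topology" and p c k :: nat
  assumes "Factorial_Ring.prime p"
    and "pro_p_group p G T"
    and "topologically_finitely_generated G T"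
    and "nilpotency_class G T c"
  defines "K \<equiv> pow_sub G T (carrier G) (p ^ k)"
  shows "(odd p \<and> log (real p) (real c + 1) \<le> real k - 1 \<longrightarrow>
            (\<forall>N. N \<lhd> G \<and> closedin T N \<longrightarrow> comm_sub G T N K \<subseteq> pow_sub G T N p)
            \<and> powerful p G T K)
       \<and> (p = 2 \<and> log 2 (real c + 1) \<le> real k - 2 \<longrightarrow>
            (\<forall>N. N \<lhd> G \<and> closedin T N \<longrightarrow> comm_sub G T N K \<subseteq> pow_sub G T N 4)
            \<and> powerful p G T K)"
proof -
  interpret topgroup G T
    using assms(2) by (simp add: pro_p_group_def topological_group_imp_topgroup)
  have nil: "lcs G T (Suc c) = {\<one>\<^bsub>G\<^esub>}" using assms(4) by (simp add: nilpotency_class_def)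
  have "K \<lhd> G" unfolding K_def by (rule pow_sub_normal [OF normal_self])
  have main: "comm_sub G T N K \<subseteq> pow_sub G T N (p ^ j)"
    if "N \<lhd> G" "log (real p) (real c + 1) \<le> real k - real j" for N j
    unfolding K_def using prime_power_dvd_binomial_of_log [OF assms(1) that(2)]
    by (intro comm_sub_pow_sub_le [OF nil that(1)])
  show ?thesis
  proof (intro conjI impI)
    assume "odd p \<and> log (real p) (real c + 1) \<le> real k - 1"
    then show "\<forall>N. N \<lhd> G \<and> closedin T N \<longrightarrow> comm_sub G T N K \<subseteq> pow_sub G T N p"
      and "powerful p G T K"
      using main [of _ 1] \<open>K \<lhd> G\<close> by (auto simp: powerful_def)
  next
    assume "p = 2 \<and> log 2 (real c + 1) \<le> real k - 2"
    then show "\<forall>N. N \<lhd> G \<and> closedin T N \<longrightarrow> comm_sub G T N K \<subseteq> pow_sub G T N 4"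
      and "powerful p G T K"
      using main [of _ 2] \<open>K \<lhd> G\<close> by (auto simp: powerful_def)
  qed
qed

end
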